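(* Let $f$ be a DNF with $k$ terms and let $y\in\{0,1\}^n$ satisfy $f_{>\tau}$ and not $f_{\le\tau}$ ($\tau=1000k$). Fix any permutation $\pi$ and let $z_0,z_1,\dots$ be the sequence of the sweep process started at $y$. If $i\ge 1$ is such that $(z_i)_a=y_a$ for all $a\in P(y)$, then $\mathcal{T}_f(z_i)\subseteq\mathcal{T}_f(z_{i-1})$.
   Context: Terms are sets of literals, a DNF is a set of terms; $g_{\le L}$ / $g_{>L}$ are the sub-DNFs of terms of length $\le L$ / $>L$. For $x\in\{0,1\}^n$, $\mathcal{T}_f(x)$ is the set of terms of $f$ satisfied by $x$. Protected set: for each term $T\in f$ not satisfied by $y$, take the literal of $T$ with the smallest index $i\in[n]$ that $y$ does not satisfy; $P(y)\subseteq[n]$ is the set of all these indices. Sweep process: given $y$ with $f(y)=1$ and a permutation $\pi$ listing the indices of $[n]$ as $\pi(0),\pi(1),\dots,\pi(n-1)$, set $z_0=y$ and for each $i$, $z_{i+1}=z_i^{\oplus\pi(i)}$ if $f(z_i^{\oplus\pi(i)})=1$ and $z_{i+1}=z_i$ otherwise, where $x^{\oplus j}$ denotes $x$ with bit $j$ flipped. *)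

theory Defs
  imports "HOL-Combinatorics.Permutations"
begin

text \<open>A literal is a pair (i, b): it is satisfied by x iff x i = b.
  Points of {0,1}^n are functions nat => bool (only coordinates < n matter).\<close>
type_synonym lit = "nat \<times> bool"
type_synonym dnf_term = "lit set"
type_synonym dnf = "dnf_term set"

definition lit_sat :: "lit \<Rightarrow> (nat \<Rightarrow> bool) \<Rightarrow> bool" where
  "lit_sat l x \<longleftrightarrow> x (fst l) = snd l"

definition term_sat :: "dnf_term \<Rightarrow> (nat \<Rightarrow> bool) \<Rightarrow> bool" where
  "term_sat T x \<longleftrightarrow> (\<forall>l\<in>T. lit_sat l x)"

definition dnf_eval :: "dnf \<Rightarrow> (nat \<Rightarrow> bool) \<Rightarrow> bool" where
  "dnf_eval f x \<longleftrightarrow> (\<exists>T\<in>f. term_sat T x)"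

definition dnf_le :: "dnf \<Rightarrow> nat \<Rightarrow> dnf" where
  "dnf_le f L = {T \<in> f. card T \<le> L}"

definition dnf_gt :: "dnf \<Rightarrow> nat \<Rightarrow> dnf" where
  "dnf_gt f L = {T \<in> f. card T > L}"

definition sat_terms :: "dnf \<Rightarrow> (nat \<Rightarrow> bool) \<Rightarrow> dnf_term set" where
  "sat_terms f x = {T \<in> f. term_sat T x}"

definition protected_set :: "dnf \<Rightarrow> (nat \<Rightarrow> bool) \<Rightarrow> nat set" where
  "protected_set f y =
     {LEAST i. \<exists>b. (i, b) \<in> T \<and> \<not> lit_sat (i, b) y | T. T \<in> f \<and> \<not> term_sat T y}"

definition flip :: "(nat \<Rightarrow> bool) \<Rightarrow> nat \<Rightarrow> (nat \<Rightarrow> bool)" where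
  "flip x j = x(j := \<not> x j)"

fun sweep :: "dnf \<Rightarrow> (nat \<Rightarrow> nat) \<Rightarrow> (nat \<Rightarrow> bool) \<Rightarrow> nat \<Rightarrow> (nat \<Rightarrow> bool)" where
  "sweep f \<pi> y 0 = y"
| "sweep f \<pi> y (Suc i) =
     (let z = sweep f \<pi> y i in
      if dnf_eval f (flip z (\<pi> i)) then flip z (\<pi> i) else z)"

end

theory Submission
  imports Defs
begin

(* If a term T is satisfied by z_i but not by y, its protected literal is violated by y,
   so z_i cannot agree with y at that index; hence every term satisfied by z_i is also
   satisfied by y. Now z_i and z_(i-1) differ at most at \<pi>(i-1), which has not been visited
   before step i, so z_(i-1) agrees there with y and thus satisfies every literal of T. *)

lemma sweep_unvisited:
  "a \<notin> \<pi> ` {..<m} \<Longrightarrow> sweep f \<pi> y m a = y a"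
  by (induction m) (auto simp: Let_def flip_def lessThan_Suc)

lemma sweep_Suc_other:
  "c \<noteq> \<pi> m \<Longrightarrow> sweep f \<pi> y (Suc m) c = sweep f \<pi> y m c"
  by (simp add: Let_def flip_def)

lemma term_sat_if_agree_on_protected_set:
  assumes "T \<in> f" and "term_sat T x" and "\<forall>a\<in>protected_set f y. x a = y a"
  shows "term_sat T y"
proof (rule ccontr)
  assume unsat: "\<not> term_sat T y"
  define violated where "violated = (\<lambda>a. \<exists>b. (a, b) \<in> T \<and> \<not> lit_sat (a, b) y)"
  define a where "a = (LEAST a. violated a)"
  have "violated a"
    using unsat LeastI_ex[of violated] unfolding a_def violated_def term_sat_def by auto
  then obtain b where ab: "(a, b) \<in> T" "y a \<noteq> b"
    unfolding violated_def lit_sat_def by auto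
  have "a \<in> protected_set f y"
    using assms(1) unsat unfolding protected_set_def a_def violated_def by blast
  then have "x a = y a" using assms(3) by blast
  moreover have "x a = b" using assms(2) ab(1) by (auto simp: term_sat_def lit_sat_def)
  ultimately show False using ab(2) by simp
qed

lemma term_sat_if_pointwise_from:
  assumes "term_sat T x" and "term_sat T y" and "\<And>c. z c = x c \<or> z c = y c"
  shows "term_sat T z"
  using assms unfolding term_sat_def lit_sat_def by (metis prod.collapse)

theorem lemma4p4:
  fixes f :: dnf and k n :: nat and y :: "nat \<Rightarrow> bool" and \<pi> :: "nat \<Rightarrow> nat" and i :: nat
  assumes "finite f" and "card f = k"
    and "\<forall>T\<in>f. \<forall>l\<in>T. fst l < n"
    and "dnf_eval (dnf_gt f (1000 * k)) y"
    and "\<not> dnf_eval (dnf_le f (1000 * k)) y"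
    and "\<pi> permutes {..<n}"
    and "1 \<le> i" and "i \<le> n"
    and "\<forall>a\<in>protected_set f y. sweep f \<pi> y i a = y a"
  shows "sat_terms f (sweep f \<pi> y i) \<subseteq> sat_terms f (sweep f \<pi> y (i - 1))"
proof
  obtain m where i: "i = Suc m" using \<open>1 \<le> i\<close> by (cases i) auto
  have "\<pi> m \<notin> \<pi> ` {..<m}"
    using permutes_inj[OF \<open>\<pi> permutes {..<n}\<close>] by (auto dest: injD)
  then have unvisited: "sweep f \<pi> y m (\<pi> m) = y (\<pi> m)"
    by (rule sweep_unvisited)
  fix T assume "T \<in> sat_terms f (sweep f \<pi> y i)"
  then have T: "T \<in> f" "term_sat T (sweep f \<pi> y i)"
    by (auto simp: sat_terms_def)
  have "term_sat T y"
    using T assms(9) by (rule term_sat_if_agree_on_protected_set)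
  have "term_sat T (sweep f \<pi> y m)"
    using T(2) \<open>term_sat T y\<close>
  proof (rule term_sat_if_pointwise_from)
    show "sweep f \<pi> y m c = sweep f \<pi> y i c \<or> sweep f \<pi> y m c = y c" for c
      using sweep_Suc_other[of c \<pi> m f y] unvisited unfolding i by (cases "c = \<pi> m") auto
  qed
  then show "T \<in> sat_terms f (sweep f \<pi> y (i - 1))"
    using T(1) by (simp add: sat_terms_def i)
qed

end
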